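(* Consider the decentralized caching problem with $N$ files and local cache size of $M$ files per user, with $0<M\le N$. For every file size $F$, every $\epsilon>0$, every number $K$ of requesting users and every statistics $\boldsymbol{s}$ of demands in $\{1,\dots,N\}^K$, $$\min_{P_{\mathcal{M}}}R^*_{\epsilon,K}(\boldsymbol{s},P_{\mathcal{M}})\ \ge\ \frac{N-M}{M}\left(1-\left(1-\frac{M}{N}\right)^{N_{\mathrm{e}}(\boldsymbol{s})}\right)-\left(\frac{1}{F}+N_{\mathrm{e}}^2(\boldsymbol{s})\epsilon\right),$$ where the minimum is over all prefetching distributions $P_{\mathcal{M}}$.
   Context: Setting: $N$ files of $F$ bits each, all bits i.i.d. Bernoulli$(1/2)$. A prefetching distribution $P_{\mathcal{M}}$ is a probability distribution on sets of at most $MF$ bit indices; with $K$ requesting users, cache index sets $\mathcal{M}_1,\dots,\mathcal{M}_K$ are drawn i.i.d. from $P_{\mathcal{M}}$ and user $k$ stores the indexed bits uncoded. For a deterministic prefetching $\boldsymbol{\mathcal{M}}$ and demand $\boldsymbol{d}\in\{1,\dots,N\}^K$, a rate $R$ is $\epsilon$-achievable if there are an encoder $X=\psi(W_1,\dots,W_N)\in\{0,1\}^{RF}$ and decoders such that each user $k$ recovers $W_{d_k}$ from $X$ and its cached bits with error probability at most $\epsilon$. Given $P_{\mathcal{M}}$ and $\boldsymbol{d}$, $R$ is $\epsilon$-achievable if for every realization $\boldsymbol{\mathcal{M}}$ there is $\epsilon_{\boldsymbol{\mathcal{M}}}$ with $R$ $\epsilon_{\boldsymbol{\mathcal{M}}}$-achievable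 given $\boldsymbol{\mathcal{M}},\boldsymbol{d}$ and $\mathbb{E}[\epsilon_{\boldsymbol{\mathcal{M}}}]\le\epsilon$; $R^*_{\epsilon,K}(\boldsymbol{d},P_{\mathcal{M}})$ is the minimum such rate. The statistics $\boldsymbol{s}(\boldsymbol{d})$ of a demand is the length-$N$ array, sorted nonincreasingly, whose $i$-th entry is the number of users requesting the $i$-th most requested file; $\mathcal{D}_{\boldsymbol{s}}$ is the set of demands with statistics $\boldsymbol{s}$; $N_{\mathrm{e}}(\boldsymbol{s})$ is the number of distinct requested files. $R^*_{\epsilon,K}(\boldsymbol{s},P_{\mathcal{M}})=\frac{1}{|\mathcal{D}_{\boldsymbol{s}}|}\sum_{\boldsymbol{d}\in\mathcal{D}_{\boldsymbol{s}}}R^*_{\epsilon,K}(\boldsymbol{d},P_{\mathcal{M}})$. *)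

theory Defs
  imports "HOL-Probability.Probability_Mass_Function"
begin

text \<open>Bit indices: pairs (file n, position j) with n in 1..N, j in 1..F.\<close>
definition bit_idx :: "nat \<Rightarrow> nat \<Rightarrow> (nat \<times> nat) set" where
  "bit_idx N F = {1..N} \<times> {1..F}"

text \<open>All realizations of the library (uniformly distributed).\<close>
definition file_lib :: "nat \<Rightarrow> nat \<Rightarrow> (nat \<times> nat \<Rightarrow> bool) set" where
  "file_lib N F = PiE (bit_idx N F) (\<lambda>_. UNIV)"

definition demands :: "nat \<Rightarrow> nat \<Rightarrow> (nat \<Rightarrow> nat) set" where
  "demands N K = PiE {1..K} (\<lambda>_. {1..N})"

definition valid_prefetch :: "nat \<Rightarrow> nat \<Rightarrow> real \<Rightarrow> (nat \<times> nat) set pmf \<Rightarrow> bool" where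
  "valid_prefetch N F M P \<longleftrightarrow>
     set_pmf P \<subseteq> {S. S \<subseteq> bit_idx N F \<and> real (card S) \<le> M * real F}"

definition achievable_det ::
  "nat \<Rightarrow> nat \<Rightarrow> nat \<Rightarrow> (nat \<Rightarrow> (nat \<times> nat) set) \<Rightarrow> (nat \<Rightarrow> nat) \<Rightarrow> real \<Rightarrow> real \<Rightarrow> bool" where
  "achievable_det N F K Ms d R e \<longleftrightarrow>
     (\<exists>(\<psi> :: (nat \<times> nat \<Rightarrow> bool) \<Rightarrow> bool list)
        (\<phi> :: nat \<Rightarrow> bool list \<Rightarrow> (nat \<times> nat \<Rightarrow> bool) \<Rightarrow> nat \<Rightarrow> bool).
        (\<forall>W\<in>file_lib N F. length (\<psi> W) = nat \<lfloor>R * real F\<rfloor>) \<and>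
        (\<forall>k\<in>{1..K}.
           real (card {W \<in> file_lib N F.
                   \<exists>j\<in>{1..F}. \<phi> k (\<psi> W) (restrict W (Ms k)) j \<noteq> W (d k, j)})
             / 2 ^ (N * F) \<le> e))"

definition cache_tuples :: "nat \<Rightarrow> nat \<Rightarrow> nat \<Rightarrow> (nat \<Rightarrow> (nat \<times> nat) set) set" where
  "cache_tuples N F K = PiE {1..K} (\<lambda>_. Pow (bit_idx N F))"

definition achievable_P ::
  "nat \<Rightarrow> nat \<Rightarrow> nat \<Rightarrow> (nat \<times> nat) set pmf \<Rightarrow> (nat \<Rightarrow> nat) \<Rightarrow> real \<Rightarrow> real \<Rightarrow> bool" where
  "achievable_P N F K P d R eps \<longleftrightarrow>
     (\<exists>e :: (nat \<Rightarrow> (nat \<times> nat) set) \<Rightarrow> real.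
        (\<forall>Ms\<in>cache_tuples N F K. achievable_det N F K Ms d R (e Ms)) \<and>
        (\<Sum>Ms\<in>cache_tuples N F K. (\<Prod>k\<in>{1..K}. pmf P (Ms k)) * e Ms) \<le> eps)"

definition Rstar_d ::
  "nat \<Rightarrow> nat \<Rightarrow> nat \<Rightarrow> real \<Rightarrow> (nat \<Rightarrow> nat) \<Rightarrow> (nat \<times> nat) set pmf \<Rightarrow> real" where
  "Rstar_d N F K eps d P = Inf {R. R \<ge> 0 \<and> achievable_P N F K P d R eps}"

definition stats :: "nat \<Rightarrow> nat \<Rightarrow> (nat \<Rightarrow> nat) \<Rightarrow> nat list" where
  "stats N K d = rev (sort (map (\<lambda>i. card {k\<in>{1..K}. d k = i}) [1..<N+1]))"

definition demands_of_stats :: "nat \<Rightarrow> nat \<Rightarrow> nat list \<Rightarrow> (nat \<Rightarrow> nat) set" where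
  "demands_of_stats N K s = {d \<in> demands N K. stats N K d = s}"

definition Ne :: "nat list \<Rightarrow> nat" where
  "Ne s = length (filter (\<lambda>x. x > 0) s)"

definition Rstar_s ::
  "nat \<Rightarrow> nat \<Rightarrow> nat \<Rightarrow> real \<Rightarrow> nat list \<Rightarrow> (nat \<times> nat) set pmf \<Rightarrow> real" where
  "Rstar_s N F K eps s P =
     (\<Sum>d\<in>demands_of_stats N K s. Rstar_d N F K eps d P) / real (card (demands_of_stats N K s))"

end

theory Submission
  imports Defs "HOL-Analysis.Convex" "HOL-Number_Theory.Cong"
begin

text \<open>
  Fix a cache realization and a demand, and let \<open>T\<close> be the users whose file was not requested
  by an earlier user. If every user of \<open>T\<close> decodes correctly, the transmitted message together
  with the bits outside \<open>B\<close>, the bits of the requested files that no earlier user of \<open>T\<close> has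
  cached, determines the library: user \<open>k\<close> recovers its file, which supplies the cache contents
  that later users need. Counting libraries gives \<open>(1 - |T| \<epsilon>) 2\<^bsup>|B|\<^esup> \<le> 2\<^bsup>R F\<^esup>\<close>, hence
  \<open>R F \<ge> |B| - 1 - |T|\<^sup>2 \<epsilon> F\<close>.

  For i.i.d. caches the expected size of \<open>B\<close> is a sum of terms \<open>(1 - p\<^sub>b)\<^sup>i\<close>, one for each
  bit \<open>b\<close> of the file requested by the \<open>i\<close>-th user of \<open>T\<close>, where \<open>p\<^sub>b\<close> is the probability
  that \<open>b\<close> is cached. The demands with given statistics are closed under cyclic relabelling of
  the files, so averaging over them turns the bits of the \<open>i\<close>-th requested file into all bits
  with equal weight. Jensen's inequality and \<open>\<Sum>\<^sub>b p\<^sub>b \<le> M F\<close> bound the average of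
  \<open>(1 - p\<^sub>b)\<^sup>i\<close> over all bits by \<open>(1 - M/N)\<^sup>i\<close> from below, and the geometric sum over \<open>i\<close>
  gives the bound.
\<close>

lemma card_Diff_UN_ge:
  assumes "finite A" "finite I" "\<And>i. i \<in> I \<Longrightarrow> E i \<subseteq> A"
  shows "real (card A) - (\<Sum>i\<in>I. real (card (E i))) \<le> real (card (A - (\<Union>i\<in>I. E i)))"
proof -
  have sub: "(\<Union>i\<in>I. E i) \<subseteq> A" using assms(3) by blast
  have "real (card (A - (\<Union>i\<in>I. E i))) = real (card A) - real (card (\<Union>i\<in>I. E i))"
    using card_Diff_subset[OF finite_subset[OF sub assms(1)] sub] card_mono[OF assms(1) sub]
    by (simp add: of_nat_diff)
  moreover have "card (\<Union>i\<in>I. E i) \<le> (\<Sum>i\<in>I. card (E i))"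
    by (rule card_UN_le[OF assms(2)])
  ultimately show ?thesis by (simp flip: of_nat_sum)
qed

lemma exponent_bound_of_power_bound:
  fixes a :: real and u c L :: nat
  assumes a: "0 \<le> a" and u: "u \<le> c" and pow: "(1 - a) * 2 ^ u \<le> 2 ^ L"
  shows "real u - 1 - a * real c \<le> real L"
proof (cases "u \<le> L")
  case True
  moreover have "0 \<le> a * real c" using a by simp
  ultimately show ?thesis by linarith
next
  case False
  define x where "x = u - L"
  have ux: "u = L + x" using False by (simp add: x_def)
  have "(1 - a) * 2 ^ x * 2 ^ L \<le> 1 * 2 ^ L" using pow by (simp add: ux power_add mult_ac)
  then have "(1 - a) * 2 ^ x \<le> 1" by (rule mult_right_le_imp_le) simp
  then have gap: "1 - 1 / 2 ^ x \<le> a" by (simp add: field_simps)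
  have "real x - 1 \<le> (1 - 1 / 2 ^ x) * real x"
    using of_nat_less_two_power[of x] by (simp add: algebra_simps divide_le_eq)
  also have "\<dots> \<le> a * real c"
    using gap u ux a by (intro mult_mono) (simp_all add: divide_le_eq)
  finally show ?thesis using ux by simp
qed

lemma sum_PiE_prod_weighted:
  fixes p q :: "'a \<Rightarrow> 'c::comm_semiring_1"
  assumes "finite I" "finite X" "A \<subseteq> I" "(\<Sum>x\<in>X. p x) = 1"
  shows "(\<Sum>f\<in>PiE I (\<lambda>_. X). (\<Prod>i\<in>I. p (f i)) * (\<Prod>i\<in>A. q (f i)))
           = (\<Sum>x\<in>X. p x * q x) ^ card A"
proof -
  have "(\<Sum>f\<in>PiE I (\<lambda>_. X). (\<Prod>i\<in>I. p (f i)) * (\<Prod>i\<in>A. q (f i)))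
      = (\<Sum>f\<in>PiE I (\<lambda>_. X). \<Prod>i\<in>I. p (f i) * (if i \<in> A then q (f i) else 1))"
    using assms by (simp add: prod.distrib prod.If_cases Int_absorb1)
  also have "\<dots> = (\<Prod>i\<in>I. \<Sum>x\<in>X. p x * (if i \<in> A then q x else 1))"
    by (rule prod_sum_PiE[symmetric]) (use assms in auto)
  also have "\<dots> = (\<Prod>i\<in>I. if i \<in> A then \<Sum>x\<in>X. p x * q x else 1)"
    using assms by (intro prod.cong) auto
  also have "\<dots> = (\<Sum>x\<in>X. p x * q x) ^ card A"
    using assms by (simp add: prod.If_cases Int_absorb1)
  finally show ?thesis .
qed

lemma of_bool_Ball_eq_prod:
  "finite A \<Longrightarrow> of_bool (\<forall>k\<in>A. P k) = (\<Prod>k\<in>A. of_bool (P k) :: 'a::comm_semiring_1)"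
  by (induction A rule: finite_induct) (simp_all add: of_bool_conj)

lemma power_mean_le:
  fixes x :: "'a \<Rightarrow> real"
  assumes "finite S" "S \<noteq> {}" "\<And>b. b \<in> S \<Longrightarrow> 0 \<le> x b"
  shows "((\<Sum>b\<in>S. x b) / card S) ^ i \<le> (\<Sum>b\<in>S. x b ^ i) / card S"
proof -
  have convex: "convex_on {0..} (\<lambda>y::real. y ^ i)"
    by (cases "even i") (auto intro: convex_on_subset[OF convex_power_even] convex_power_odd)
  have "(\<Sum>b\<in>S. (1 / card S) *\<^sub>R x b) ^ i \<le> (\<Sum>b\<in>S. 1 / card S * x b ^ i)"
    by (rule convex_on_sum[OF assms(1,2) convex]) (use assms in auto)
  then show ?thesis by (simp add: sum_divide_distrib)
qed

lemma sum_power_one_minus: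
  fixes a :: real
  assumes "a \<noteq> 0"
  shows "(\<Sum>i=1..n. (1 - a) ^ i) = (1 - a) / a * (1 - (1 - a) ^ n)"
  using assms by (cases n) (simp_all add: sum_gp field_simps)

lemma finite_bit_idx [simp]: "finite (bit_idx N F)"
  by (simp add: bit_idx_def)

lemma card_bit_idx: "card (bit_idx N F) = N * F"
  by (simp add: bit_idx_def)

lemma finite_file_lib [simp]: "finite (file_lib N F)"
  by (simp add: file_lib_def finite_PiE)

lemma card_file_lib: "card (file_lib N F) = 2 ^ (N * F)"
  by (simp add: file_lib_def card_PiE card_bit_idx)

lemma file_lib_undefined: "W \<in> file_lib N F \<Longrightarrow> x \<notin> bit_idx N F \<Longrightarrow> W x = undefined"
  unfolding file_lib_def by (rule PiE_arb)

section \<open>A converse bound for one cache realization\<close>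

definition uncached_bits ::
  "nat \<Rightarrow> (nat \<Rightarrow> (nat \<times> nat) set) \<Rightarrow> (nat \<Rightarrow> nat) \<Rightarrow> nat set \<Rightarrow> (nat \<times> nat) set" where
  "uncached_bits F Ms d T =
     {(d k, j) | k j. k \<in> T \<and> j \<in> {1..F} \<and> (\<forall>k'\<in>T. k' \<le> k \<longrightarrow> (d k, j) \<notin> Ms k')}"

lemma uncached_bits_subset: "d ` T \<subseteq> {1..N} \<Longrightarrow> uncached_bits F Ms d T \<subseteq> bit_idx N F"
  unfolding uncached_bits_def bit_idx_def by auto

lemma card_uncached_bits_le:
  assumes "finite T"
  shows "card (uncached_bits F Ms d T) \<le> card T * F"
proof -
  have "uncached_bits F Ms d T \<subseteq> (\<lambda>(k, j). (d k, j)) ` (T \<times> {1..F})"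
    unfolding uncached_bits_def by auto
  then have "card (uncached_bits F Ms d T) \<le> card (T \<times> {1..F})"
    using assms by (meson card_image_le card_mono finite_SigmaI finite_atLeastAtMost
        finite_imageI le_trans)
  then show ?thesis by (simp add: card_cartesian_product)
qed

lemma decoding_determines_library:
  fixes enc :: "(nat \<times> nat \<Rightarrow> bool) \<Rightarrow> 'm"
    and dec :: "nat \<Rightarrow> 'm \<Rightarrow> (nat \<times> nat \<Rightarrow> bool) \<Rightarrow> nat \<Rightarrow> bool"
  assumes W: "W \<in> file_lib N F" and W': "W' \<in> file_lib N F"
    and decodes: "\<And>k j. k \<in> T \<Longrightarrow> j \<in> {1..F} \<Longrightarrow> dec k (enc W) (restrict W (Ms k)) j = W (d k, j)"
    and decodes': "\<And>k j. k \<in> T \<Longrightarrow> j \<in> {1..F} \<Longrightarrow> dec k (enc W') (restrict W' (Ms k)) j = W' (d k, j)"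
    and message: "enc W = enc W'"
    and rest: "\<And>x. x \<in> bit_idx N F - uncached_bits F Ms d T \<Longrightarrow> W x = W' x"
  shows "W = W'"
proof -
  have outside: "W x = W' x" if "x \<notin> uncached_bits F Ms d T" for x
    using rest file_lib_undefined[OF W, of x] file_lib_undefined[OF W', of x] that
    by (cases "x \<in> bit_idx N F") auto
  have requested: "W (d k, j) = W' (d k, j)" if "k \<in> T" "j \<in> {1..F}" for k j
    using that
  proof (induction k arbitrary: j rule: less_induct)
    case (less k)
    have cache: "restrict W (Ms k) = restrict W' (Ms k)"
    proof
      fix x
      show "restrict W (Ms k) x = restrict W' (Ms k) x"
      proof (cases "x \<in> Ms k \<and> x \<in> uncached_bits F Ms d T")
        case True
        then obtain k' j' where x: "x = (d k', j')" and k': "k' \<in> T" "j' \<in> {1..F}"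
          and uncached: "\<forall>k''\<in>T. k'' \<le> k' \<longrightarrow> x \<notin> Ms k''"
          unfolding uncached_bits_def by blast
        have "k' < k" using True uncached less.prems(1) by force
        then show ?thesis using less.IH[OF _ k'] x by simp
      next
        case False
        then show ?thesis using outside by auto
      qed
    qed
    have "W (d k, j) = dec k (enc W) (restrict W (Ms k)) j" using decodes less.prems by simp
    also have "\<dots> = dec k (enc W') (restrict W' (Ms k)) j" by (simp add: message cache)
    also have "\<dots> = W' (d k, j)" using decodes' less.prems by simp
    finally show ?case .
  qed
  show ?thesis
    unfolding file_lib_def
  proof (rule PiE_ext[OF W[unfolded file_lib_def] W'[unfolded file_lib_def]])
    fix x
    show "W x = W' x"
      using outside requested by (cases "x \<in> uncached_bits F Ms d T") (auto simp: uncached_bits_def)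
  qed
qed

lemma card_decodable_libraries_le:
  fixes enc :: "(nat \<times> nat \<Rightarrow> bool) \<Rightarrow> bool list"
    and dec :: "nat \<Rightarrow> bool list \<Rightarrow> (nat \<times> nat \<Rightarrow> bool) \<Rightarrow> nat \<Rightarrow> bool"
  assumes len: "\<And>W. W \<in> file_lib N F \<Longrightarrow> length (enc W) = L"
    and B: "uncached_bits F Ms d T \<subseteq> bit_idx N F"
  shows "card {W \<in> file_lib N F. \<forall>k\<in>T. \<forall>j\<in>{1..F}. dec k (enc W) (restrict W (Ms k)) j = W (d k, j)}
           \<le> 2 ^ L * 2 ^ (N * F - card (uncached_bits F Ms d T))"
    (is "card ?G \<le> _")
proof -
  define C where "C = bit_idx N F - uncached_bits F Ms d T"
  define Codes where "Codes = {xs :: bool list. length xs = L} \<times> PiE C (\<lambda>_. UNIV :: bool set)"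
  have "inj_on (\<lambda>W. (enc W, restrict W C)) ?G"
  proof (rule inj_onI)
    fix W W' assume W: "W \<in> ?G" and W': "W' \<in> ?G"
      and eq: "(enc W, restrict W C) = (enc W', restrict W' C)"
    have "W x = W' x" if "x \<in> C" for x
      using eq that by (metis prod.inject restrict_apply')
    with W W' eq show "W = W'"
      by (intro decoding_determines_library[where enc = enc and dec = dec and Ms = Ms and d = d and T = T])
        (auto simp: C_def)
  qed
  moreover have "(\<lambda>W. (enc W, restrict W C)) ` ?G \<subseteq> Codes"
    using len by (auto simp: Codes_def)
  moreover have "finite Codes"
    using finite_lists_length_eq[of "UNIV :: bool set" L] by (simp add: Codes_def C_def finite_PiE)
  ultimately have "card ?G \<le> card Codes" by (rule card_inj_on_le)
  also have "card Codes = 2 ^ L * 2 ^ card C"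
    using card_lists_length_eq[of "UNIV :: bool set" L]
    by (simp add: Codes_def C_def card_cartesian_product card_PiE)
  also have "card C = N * F - card (uncached_bits F Ms d T)"
    using B by (simp add: C_def card_Diff_subset finite_subset card_bit_idx)
  finally show ?thesis .
qed

lemma achievable_det_rate_ge:
  assumes ach: "achievable_det N F K Ms d R e" and R: "0 \<le> R"
    and T: "T \<subseteq> {1..K}" and dT: "d ` T \<subseteq> {1..N}"
  shows "real (card (uncached_bits F Ms d T)) - 1 - real (card T) ^ 2 * e * real F \<le> R * real F"
proof -
  obtain \<psi> :: "(nat \<times> nat \<Rightarrow> bool) \<Rightarrow> bool list"
    and \<phi> :: "nat \<Rightarrow> bool list \<Rightarrow> (nat \<times> nat \<Rightarrow> bool) \<Rightarrow> nat \<Rightarrow> bool"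
    where len: "\<forall>W\<in>file_lib N F. length (\<psi> W) = nat \<lfloor>R * real F\<rfloor>"
      and err: "\<forall>k\<in>{1..K}. real (card {W \<in> file_lib N F.
                   \<exists>j\<in>{1..F}. \<phi> k (\<psi> W) (restrict W (Ms k)) j \<noteq> W (d k, j)}) / 2 ^ (N * F) \<le> e"
    using ach unfolding achievable_det_def by blast
  define L where "L = nat \<lfloor>R * real F\<rfloor>"
  define Err where
    "Err k = {W \<in> file_lib N F. \<exists>j\<in>{1..F}. \<phi> k (\<psi> W) (restrict W (Ms k)) j \<noteq> W (d k, j)}" for k
  define G where
    "G = {W \<in> file_lib N F. \<forall>k\<in>T. \<forall>j\<in>{1..F}. \<phi> k (\<psi> W) (restrict W (Ms k)) j = W (d k, j)}"
  define B where "B = uncached_bits F Ms d T"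
  define n where "n = card T"
  have finT: "finite T" using T finite_subset by blast
  have card_Err: "real (card (Err k)) \<le> e * 2 ^ (N * F)" if "k \<in> T" for k
    using err that T by (auto simp: Err_def divide_le_eq)
  have "(\<Sum>k\<in>T. real (card (Err k))) \<le> real n * (e * 2 ^ (N * F))"
    using sum_mono[of T, OF card_Err] by (simp add: n_def)
  then have "2 ^ (N * F) * (1 - real n * e) \<le> real (card (file_lib N F)) - (\<Sum>k\<in>T. real (card (Err k)))"
    by (simp add: card_file_lib algebra_simps)
  also have "\<dots> \<le> real (card G)"
  proof -
    have "G = file_lib N F - (\<Union>k\<in>T. Err k)" by (auto simp: G_def Err_def)
    then show ?thesis by (simp only:) (rule card_Diff_UN_ge, auto simp: finT Err_def)
  qed
  also have "\<dots> \<le> 2 ^ (N * F) * (2 ^ L / 2 ^ card B)"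
  proof -
    have "card G \<le> 2 ^ L * 2 ^ (N * F - card B)"
      unfolding G_def B_def using len
      by (intro card_decodable_libraries_le uncached_bits_subset[OF dT]) (simp add: L_def)
    from of_nat_mono[OF this, where 'a = real]
    have "real (card G) \<le> 2 ^ L * 2 ^ (N * F - card B)" by simp
    also have "(2::real) ^ L * 2 ^ (N * F - card B) = 2 ^ (N * F) * (2 ^ L / 2 ^ card B)"
      using card_mono[OF finite_bit_idx uncached_bits_subset[OF dT]]
      by (simp add: power_diff card_bit_idx B_def field_simps)
    finally show ?thesis .
  qed
  finally have "1 - real n * e \<le> 2 ^ L / 2 ^ card B"
    by (rule mult_left_le_imp_le) simp
  then have "(1 - real n * e) * 2 ^ card B \<le> 2 ^ L"
    by (simp add: le_divide_eq)
  moreover have "0 \<le> real n * e"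
  proof (cases "T = {}")
    case False
    then obtain k where "k \<in> T" by blast
    then have "0 \<le> e * 2 ^ (N * F)" using card_Err[of k] of_nat_0_le_iff order_trans by blast
    moreover have "(0::real) < 2 ^ (N * F)" by simp
    ultimately show ?thesis by (auto simp: zero_le_mult_iff)
  qed (simp add: n_def)
  ultimately have "real (card B) - 1 - real n * e * real (n * F) \<le> real L"
    using card_uncached_bits_le[OF finT]
    by (intro exponent_bound_of_power_bound) (simp_all add: B_def n_def)
  also have "real L \<le> R * real F" using R by (simp add: L_def)
  finally show ?thesis by (simp add: B_def n_def power2_eq_square mult.assoc mult.left_commute)
qed

section \<open>Averaging over the cache realizations\<close>

definition cache_prob :: "nat \<Rightarrow> nat \<Rightarrow> (nat \<times> nat) set pmf \<Rightarrow> nat \<times> nat \<Rightarrow> real" where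
  "cache_prob N F P b = (\<Sum>S\<in>Pow (bit_idx N F). pmf P S * of_bool (b \<in> S))"

definition cache_weight :: "nat \<Rightarrow> (nat \<times> nat) set pmf \<Rightarrow> (nat \<Rightarrow> (nat \<times> nat) set) \<Rightarrow> real" where
  "cache_weight K P Ms = (\<Prod>k\<in>{1..K}. pmf P (Ms k))"

definition rank_in :: "nat set \<Rightarrow> nat \<Rightarrow> nat" where
  "rank_in T k = card {k'\<in>T. k' \<le> k}"

lemma sum_pmf_Pow_bit_idx: "valid_prefetch N F M P \<Longrightarrow> (\<Sum>S\<in>Pow (bit_idx N F). pmf P S) = 1"
  by (rule sum_pmf_eq_1) (auto simp: valid_prefetch_def)

lemma prob_uncached_by_all:
  assumes vp: "valid_prefetch N F M P" and A: "A \<subseteq> {1..K}"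
  shows "(\<Sum>Ms\<in>cache_tuples N F K. cache_weight K P Ms * of_bool (\<forall>k\<in>A. b \<notin> Ms k))
           = (1 - cache_prob N F P b) ^ card A"
proof -
  have "(\<Sum>S\<in>Pow (bit_idx N F). pmf P S * of_bool (b \<notin> S))
      = (\<Sum>S\<in>Pow (bit_idx N F). pmf P S - pmf P S * of_bool (b \<in> S))"
    by (intro sum.cong) auto
  also have "\<dots> = 1 - cache_prob N F P b"
    by (simp only: sum_subtractf sum_pmf_Pow_bit_idx[OF vp] cache_prob_def)
  moreover have "finite A" using A finite_subset by blast
  ultimately show ?thesis
    unfolding cache_tuples_def cache_weight_def
    using sum_PiE_prod_weighted[OF _ _ A sum_pmf_Pow_bit_idx[OF vp], of "\<lambda>S. of_bool (b \<notin> S)"]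
    by (simp add: of_bool_Ball_eq_prod)
qed

lemma sum_cache_weight: "valid_prefetch N F M P \<Longrightarrow> (\<Sum>Ms\<in>cache_tuples N F K. cache_weight K P Ms) = 1"
  using prob_uncached_by_all[of N F M P "{}" K] by simp

lemma card_uncached_bits_eq_sum:
  assumes "finite T" "inj_on d T"
  shows "real (card (uncached_bits F Ms d T)) =
    (\<Sum>k\<in>T. \<Sum>j\<in>{1..F}. of_bool (\<forall>k'\<in>{k'\<in>T. k' \<le> k}. (d k, j) \<notin> Ms k'))"
proof -
  define Q where "Q = (T \<times> {1..F}) \<inter> {(k, j). \<forall>k'\<in>{k'\<in>T. k' \<le> k}. (d k, j) \<notin> Ms k'}"
  have "uncached_bits F Ms d T = (\<lambda>(k, j). (d k, j)) ` Q"
    unfolding uncached_bits_def Q_def by force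
  moreover have "inj_on (\<lambda>(k, j). (d k, j)) Q"
    using assms(2) unfolding Q_def by (auto simp: inj_on_def)
  ultimately have "card (uncached_bits F Ms d T) = card Q" by (simp add: card_image)
  also have "real (card Q) = (\<Sum>x\<in>T \<times> {1..F}. of_bool (x \<in> Q))"
    using assms(1) by (simp add: Q_def Int_absorb1)
  also have "\<dots> = (\<Sum>(k, j)\<in>T \<times> {1..F}. of_bool (\<forall>k'\<in>{k'\<in>T. k' \<le> k}. (d k, j) \<notin> Ms k'))"
    by (intro sum.cong) (auto simp: Q_def)
  finally show ?thesis by (simp only: sum.cartesian_product)
qed

lemma expected_card_uncached_bits:
  assumes vp: "valid_prefetch N F M P" and T: "T \<subseteq> {1..K}" and inj: "inj_on d T"
  shows "(\<Sum>Ms\<in>cache_tuples N F K. cache_weight K P Ms * real (card (uncached_bits F Ms d T)))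
           = (\<Sum>k\<in>T. \<Sum>j\<in>{1..F}. (1 - cache_prob N F P (d k, j)) ^ rank_in T k)"
proof -
  have "finite T" using T finite_subset by blast
  then have "(\<Sum>Ms\<in>cache_tuples N F K. cache_weight K P Ms * real (card (uncached_bits F Ms d T)))
      = (\<Sum>Ms\<in>cache_tuples N F K. \<Sum>k\<in>T. \<Sum>j\<in>{1..F}.
           cache_weight K P Ms * of_bool (\<forall>k'\<in>{k'\<in>T. k' \<le> k}. (d k, j) \<notin> Ms k'))"
    by (simp only: card_uncached_bits_eq_sum inj sum_distrib_left)
  also have "\<dots> = (\<Sum>k\<in>T. \<Sum>j\<in>{1..F}. \<Sum>Ms\<in>cache_tuples N F K.
           cache_weight K P Ms * of_bool (\<forall>k'\<in>{k'\<in>T. k' \<le> k}. (d k, j) \<notin> Ms k'))"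
    by (subst sum.swap) (intro sum.cong refl sum.swap)
  also have "\<dots> = (\<Sum>k\<in>T. \<Sum>j\<in>{1..F}. (1 - cache_prob N F P (d k, j)) ^ rank_in T k)"
    unfolding rank_in_def by (intro sum.cong refl prob_uncached_by_all[OF vp]) (use T in auto)
  finally show ?thesis .
qed

text \<open>Sending the whole library uncoded achieves rate \<open>N\<close>; this makes the infimum in
  \<^const>\<open>Rstar_d\<close> range over a nonempty set.\<close>

lemma achievable_P_uncoded:
  assumes d: "d \<in> demands N K" and eps: "0 \<le> eps"
  shows "achievable_P N F K P d (real N) eps"
proof -
  define bits where "bits = List.product [1..<N+1] [1..<F+1]"
  define \<psi> where "\<psi> W = map W bits" for W :: "nat \<times> nat \<Rightarrow> bool"
  define \<phi> where "\<phi> k xs (z :: nat \<times> nat \<Rightarrow> bool) j =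
    (case map_of (zip bits xs) (d k, j) of None \<Rightarrow> False | Some b \<Rightarrow> b)"
    for k :: nat and xs :: "bool list" and z and j :: nat
  have set_bits: "set bits = {1..N} \<times> {1..F}" by (auto simp: bits_def)
  have "achievable_det N F K Ms d (real N) 0" for Ms
    unfolding achievable_det_def
  proof (intro exI[of _ \<psi>] exI[of _ \<phi>] conjI ballI)
    fix W show "length (\<psi> W) = nat \<lfloor>real N * real F\<rfloor>"
      by (simp add: \<psi>_def bits_def length_product flip: of_nat_mult)
  next
    fix k assume "k \<in> {1..K}"
    then have "d k \<in> {1..N}" using d by (auto simp: demands_def)
    then have no_error: "{W \<in> file_lib N F. \<exists>j\<in>{1..F}. \<phi> k (\<psi> W) (restrict W (Ms k)) j \<noteq> W (d k, j)} = {}"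
      by (auto simp: \<phi>_def \<psi>_def map_of_zip_map set_bits)
    show "real (card {W \<in> file_lib N F. \<exists>j\<in>{1..F}.
        \<phi> k (\<psi> W) (restrict W (Ms k)) j \<noteq> W (d k, j)}) / 2 ^ (N * F) \<le> 0"
      unfolding no_error by simp
  qed
  then show ?thesis unfolding achievable_P_def
    by (intro exI[of _ "\<lambda>_. 0"]) (simp add: eps)
qed

lemma Rstar_d_ge:
  assumes vp: "valid_prefetch N F M P" and d: "d \<in> demands N K" and T: "T \<subseteq> {1..K}"
    and inj: "inj_on d T" and F: "0 < F" and eps: "0 < eps"
  shows "(\<Sum>k\<in>T. \<Sum>j\<in>{1..F}. (1 - cache_prob N F P (d k, j)) ^ rank_in T k) / real F
           - 1 / real F - real (card T) ^ 2 * eps \<le> Rstar_d N F K eps d P"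
  unfolding Rstar_d_def
proof (rule cInf_greatest)
  show "{R. 0 \<le> R \<and> achievable_P N F K P d R eps} \<noteq> {}"
  proof -
    have "real N \<in> {R. 0 \<le> R \<and> achievable_P N F K P d R eps}"
      using achievable_P_uncoded[OF d, of eps F P] eps by simp
    then show ?thesis by blast
  qed
next
  fix R assume "R \<in> {R. 0 \<le> R \<and> achievable_P N F K P d R eps}"
  then obtain e where R: "0 \<le> R"
    and e: "\<forall>Ms\<in>cache_tuples N F K. achievable_det N F K Ms d R (e Ms)"
    and e_avg: "(\<Sum>Ms\<in>cache_tuples N F K. cache_weight K P Ms * e Ms) \<le> eps"
    unfolding achievable_P_def cache_weight_def by blast
  define C where "C = cache_tuples N F K"
  define w where "w = cache_weight K P"
  define B where "B Ms = real (card (uncached_bits F Ms d T))" for Ms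
  define n where "n = real (card T)"
  have dT: "d ` T \<subseteq> {1..N}" using d T by (auto simp: demands_def)
  have per_realization: "w Ms * (B Ms - 1 - n ^ 2 * e Ms * real F) \<le> w Ms * (R * real F)"
    if "Ms \<in> C" for Ms
    using achievable_det_rate_ge[OF e[rule_format, OF that[unfolded C_def]] R T dT]
    by (intro mult_left_mono) (simp_all add: B_def n_def w_def cache_weight_def prod_nonneg)
  have "n ^ 2 * real F * (\<Sum>Ms\<in>C. w Ms * e Ms) \<le> n ^ 2 * real F * eps"
    using e_avg by (intro mult_left_mono) (simp_all add: C_def w_def)
  then have "(\<Sum>Ms\<in>C. w Ms * B Ms) - 1 - n ^ 2 * real F * eps
      \<le> (\<Sum>Ms\<in>C. w Ms * B Ms) - (\<Sum>Ms\<in>C. w Ms) - n ^ 2 * real F * (\<Sum>Ms\<in>C. w Ms * e Ms)"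
    using sum_cache_weight[OF vp] by (simp add: C_def w_def)
  also have "\<dots> = (\<Sum>Ms\<in>C. w Ms * (B Ms - 1 - n ^ 2 * e Ms * real F))"
    by (simp add: sum_subtractf sum_distrib_left right_diff_distrib mult_ac)
  also have "\<dots> \<le> (\<Sum>Ms\<in>C. w Ms * (R * real F))"
    by (rule sum_mono) (rule per_realization)
  also have "\<dots> = R * real F"
    using sum_cache_weight[OF vp] by (simp add: C_def w_def flip: sum_distrib_right)
  finally have "((\<Sum>Ms\<in>C. w Ms * B Ms) - 1 - n ^ 2 * real F * eps) / real F \<le> R"
    using F by (simp add: divide_le_eq)
  then show "(\<Sum>k\<in>T. \<Sum>j\<in>{1..F}. (1 - cache_prob N F P (d k, j)) ^ rank_in T k) / real F
      - 1 / real F - real (card T) ^ 2 * eps \<le> R"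
    using F by (simp add: expected_card_uncached_bits[OF vp T inj] C_def w_def B_def n_def
        diff_divide_distrib)
qed

section \<open>Averaging over the demands with given statistics\<close>

definition first_requesters :: "nat \<Rightarrow> (nat \<Rightarrow> nat) \<Rightarrow> nat set" where
  "first_requesters K d = {k\<in>{1..K}. \<forall>k'\<in>{1..K}. k' < k \<longrightarrow> d k' \<noteq> d k}"

lemma first_requesters_subset: "first_requesters K d \<subseteq> {1..K}"
  by (auto simp: first_requesters_def)

lemma finite_first_requesters [simp]: "finite (first_requesters K d)"
  using first_requesters_subset finite_subset by blast

lemma inj_on_first_requesters: "inj_on d (first_requesters K d)"
proof (rule inj_onI)
  fix x y assume "x \<in> first_requesters K d" "y \<in> first_requesters K d" "d x = d y"
  then show "x = y" unfolding first_requesters_def by (cases x y rule: linorder_cases) auto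
qed

lemma image_first_requesters: "d ` first_requesters K d = d ` {1..K}"
proof
  show "d ` {1..K} \<subseteq> d ` first_requesters K d"
  proof
    fix v assume "v \<in> d ` {1..K}"
    then obtain k where k: "k \<in> {1..K}" "d k = v" by blast
    define k0 where "k0 = (LEAST k. k \<in> {1..K} \<and> d k = v)"
    have k0: "k0 \<in> {1..K} \<and> d k0 = v"
      unfolding k0_def by (rule LeastI[of _ k]) (use k in auto)
    moreover have "d k' \<noteq> d k0" if "k' \<in> {1..K}" "k' < k0" for k'
      using not_less_Least[of k' "\<lambda>k. k \<in> {1..K} \<and> d k = v"] that k0 by (auto simp: k0_def)
    ultimately show "v \<in> d ` first_requesters K d"
      by (auto simp: first_requesters_def)
  qed
qed (use first_requesters_subset in blast)

lemma card_first_requesters: "card (first_requesters K d) = card (d ` {1..K})"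
  using card_image[OF inj_on_first_requesters] image_first_requesters by metis

lemma length_filter_rev_sort: "length (filter P (rev (sort xs))) = length (filter P xs)"
  by (simp only: flip: size_mset) (simp add: mset_filter)

lemma Ne_stats:
  assumes "d \<in> demands N K"
  shows "Ne (stats N K d) = card (d ` {1..K})"
proof -
  define c where "c i = card {k\<in>{1..K}. d k = i}" for i
  have "Ne (stats N K d) = length (filter (\<lambda>x. 0 < x) (map c [1..<N+1]))"
    unfolding Ne_def stats_def c_def[symmetric] by (rule length_filter_rev_sort)
  also have "\<dots> = length (filter (\<lambda>i. 0 < c i) [1..<N+1])"
    by (simp add: filter_map comp_def)
  also have "\<dots> = card (set (filter (\<lambda>i. 0 < c i) [1..<N+1]))"
    by (rule distinct_card[symmetric]) simp
  also have "set (filter (\<lambda>i. 0 < c i) [1..<N+1]) = d ` {1..K}"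
  proof -
    have "0 < c i \<longleftrightarrow> (\<exists>k\<in>{1..K}. d k = i)" for i
      unfolding c_def by (subst card_gt_0_iff) auto
    moreover have "d ` {1..K} \<subseteq> {1..N}" using assms by (auto simp: demands_def)
    ultimately show ?thesis by auto
  qed
  finally show ?thesis .
qed

lemma bij_betw_rank_in:
  assumes "finite T"
  shows "bij_betw (rank_in T) T {1..card T}"
proof -
  have less: "rank_in T x < rank_in T y" if "x \<in> T" "y \<in> T" "x < y" for x y
  proof -
    have "y \<in> {k'\<in>T. k' \<le> y} - {k'\<in>T. k' \<le> x}" using that by auto
    then have "{k'\<in>T. k' \<le> x} \<noteq> {k'\<in>T. k' \<le> y}" by blast
    moreover have "{k'\<in>T. k' \<le> x} \<subseteq> {k'\<in>T. k' \<le> y}" using that by auto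
    ultimately have "{k'\<in>T. k' \<le> x} \<subset> {k'\<in>T. k' \<le> y}" by blast
    then show ?thesis unfolding rank_in_def using assms by (intro psubset_card_mono) auto
  qed
  have "inj_on (rank_in T) T"
    by (rule inj_onI) (metis less linorder_neqE_nat less_irrefl)
  moreover have "rank_in T ` T \<subseteq> {1..card T}"
    unfolding rank_in_def using assms
    by (auto simp: Suc_le_eq card_gt_0_iff intro!: card_mono)
  ultimately show ?thesis
    by (simp add: bij_betw_def card_subset_eq card_image)
qed

definition rotate_file :: "nat \<Rightarrow> nat \<Rightarrow> nat \<Rightarrow> nat" where
  "rotate_file N t f = (f - 1 + t) mod N + 1"

definition rotate_demand :: "nat \<Rightarrow> nat \<Rightarrow> nat \<Rightarrow> (nat \<Rightarrow> nat) \<Rightarrow> nat \<Rightarrow> nat" where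
  "rotate_demand N K t d = restrict (rotate_file N t \<circ> d) {1..K}"

lemma rotate_file_in: "0 < N \<Longrightarrow> rotate_file N t f \<in> {1..N}"
  by (simp add: rotate_file_def Suc_le_eq)

lemma inj_on_rotate_file: "inj_on (rotate_file N t) {1..N}"
proof (rule inj_onI)
  fix x y assume "x \<in> {1..N}" "y \<in> {1..N}" "rotate_file N t x = rotate_file N t y"
  then have "[x - 1 + t = y - 1 + t] (mod N)" "x - 1 < N" "y - 1 < N"
    by (auto simp: rotate_file_def cong_def)
  then show "x = y"
    using \<open>x \<in> {1..N}\<close> \<open>y \<in> {1..N}\<close> by (auto dest: cong_less_modulus_unique_nat simp: cong_add_rcancel_nat)
qed

lemma bij_betw_rotate_file:
  assumes "0 < N"
  shows "bij_betw (rotate_file N t) {1..N} {1..N}"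
proof -
  have "rotate_file N t ` {1..N} = {1..N}"
    by (rule endo_inj_surj) (use rotate_file_in[OF assms] inj_on_rotate_file in auto)
  with inj_on_rotate_file show ?thesis unfolding bij_betw_def by blast
qed

lemma sum_rotate_file:
  assumes N: "0 < N"
  shows "(\<Sum>t<N. g (rotate_file N t f)) = (\<Sum>f'\<in>{1..N}. g f')"
proof -
  have "inj_on (\<lambda>t. rotate_file N t f) {..<N}"
  proof (rule inj_onI)
    fix t t' assume "t \<in> {..<N}" "t' \<in> {..<N}" "rotate_file N t f = rotate_file N t' f"
    then show "t = t'"
      by (auto simp: rotate_file_def cong_def[symmetric] cong_add_lcancel_nat
          dest: cong_less_modulus_unique_nat)
  qed
  moreover have "(\<lambda>t. rotate_file N t f) ` {..<N} \<subseteq> {1..N}"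
    using rotate_file_in[OF N] by auto
  ultimately have "bij_betw (\<lambda>t. rotate_file N t f) {..<N} {1..N}"
    by (simp add: bij_betw_def card_subset_eq card_image)
  then show ?thesis by (rule sum.reindex_bij_betw)
qed

lemma rotate_demand_in_demands: "0 < N \<Longrightarrow> rotate_demand N K t d \<in> demands N K"
  using rotate_file_in by (auto simp: rotate_demand_def demands_def)

lemma rotate_demand_apply: "k \<in> {1..K} \<Longrightarrow> rotate_demand N K t d k = rotate_file N t (d k)"
  by (simp add: rotate_demand_def)

lemma rotate_demand_eq_rotate_file_iff:
  assumes "d \<in> demands N K" "k \<in> {1..K}" "f \<in> {1..N}"
  shows "rotate_demand N K t d k = rotate_file N t f \<longleftrightarrow> d k = f"
proof -
  have "d k \<in> {1..N}" using assms(1,2) by (auto simp: demands_def PiE_iff)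
  then show ?thesis
    using assms(2,3) inj_on_eq_iff[OF inj_on_rotate_file] by (simp add: rotate_demand_apply)
qed

lemma first_requesters_rotate_demand:
  assumes "d \<in> demands N K"
  shows "first_requesters K (rotate_demand N K t d) = first_requesters K d"
proof -
  have "rotate_demand N K t d k' = rotate_demand N K t d k \<longleftrightarrow> d k' = d k"
    if "k \<in> {1..K}" "k' \<in> {1..K}" for k k'
    using that assms rotate_demand_eq_rotate_file_iff[OF assms that(2)]
    by (auto simp: rotate_demand_apply demands_def PiE_iff)
  then show ?thesis by (auto simp: first_requesters_def)
qed

lemma stats_rotate_demand:
  assumes N: "0 < N" and d: "d \<in> demands N K"
  shows "stats N K (rotate_demand N K t d) = stats N K d"
proof -
  define c :: "(nat \<Rightarrow> nat) \<Rightarrow> nat \<Rightarrow> nat" where "c d' i = card {k\<in>{1..K}. d' k = i}" for d' i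
  define files where "files = [1..<N+1]"
  have set_files: "set files = {1..N}" and distinct_files: "distinct files"
    by (auto simp: files_def)
  have count: "c (rotate_demand N K t d) (rotate_file N t f) = c d f" if "f \<in> {1..N}" for f
    unfolding c_def using rotate_demand_eq_rotate_file_iff[OF d _ that] by (metis (lifting))
  have perm: "mset (map (rotate_file N t) files) = mset files"
    using bij_betw_rotate_file[OF N, of t] inj_on_rotate_file[of N t]
    by (intro set_eq_iff_mset_eq_distinct[THEN iffD1])
      (auto simp: set_files distinct_files distinct_map bij_betw_def)
  have "map (c d) files = map (c (rotate_demand N K t d)) (map (rotate_file N t) files)"
    unfolding map_map by (intro map_cong refl) (simp add: count set_files)
  then have "mset (map (c d) files)
      = image_mset (c (rotate_demand N K t d)) (mset (map (rotate_file N t) files))"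
    by (simp only: mset_map[of "c (rotate_demand N K t d)" "map (rotate_file N t) files"])
  also have "\<dots> = mset (map (c (rotate_demand N K t d)) files)"
    unfolding perm by (simp only: mset_map)
  finally show ?thesis
    unfolding stats_def c_def[symmetric] files_def[symmetric]
    by (metis properties_for_sort sorted_sort mset_sort)
qed

lemma bij_betw_rotate_demand:
  assumes N: "0 < N"
  shows "bij_betw (rotate_demand N K t) (demands_of_stats N K s) (demands_of_stats N K s)"
proof -
  have "inj_on (rotate_demand N K t) (demands N K)"
  proof (rule inj_onI)
    fix d d' assume d: "d \<in> demands N K" and d': "d' \<in> demands N K"
      and eq: "rotate_demand N K t d = rotate_demand N K t d'"
    show "d = d'"
    proof (rule PiE_ext[OF d[unfolded demands_def] d'[unfolded demands_def]])
      fix k assume k: "k \<in> {1..K}"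
      then have "rotate_file N t (d k) = rotate_file N t (d' k)"
        using fun_cong[OF eq, of k] by (simp add: rotate_demand_def)
      moreover have "d k \<in> {1..N}" "d' k \<in> {1..N}" using d d' k by (auto simp: demands_def PiE_iff)
      ultimately show "d k = d' k" by (metis inj_onD inj_on_rotate_file)
    qed
  qed
  then have "inj_on (rotate_demand N K t) (demands_of_stats N K s)"
    by (rule inj_on_subset) (auto simp: demands_of_stats_def)
  moreover have "rotate_demand N K t ` demands_of_stats N K s \<subseteq> demands_of_stats N K s"
    using rotate_demand_in_demands[OF N] stats_rotate_demand[OF N]
    by (auto simp: demands_of_stats_def)
  moreover have "finite (demands_of_stats N K s)"
    by (auto simp: demands_of_stats_def demands_def finite_PiE)
  ultimately show ?thesis
    by (simp add: bij_betw_def endo_inj_surj)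
qed

lemma sum_demands_of_stats_by_rank:
  fixes h :: "nat \<Rightarrow> nat \<Rightarrow> real"
  assumes N: "0 < N" and n: "\<And>d. d \<in> demands_of_stats N K s \<Longrightarrow> card (first_requesters K d) = n"
  shows "real N * (\<Sum>d\<in>demands_of_stats N K s. \<Sum>k\<in>first_requesters K d.
              h (rank_in (first_requesters K d) k) (d k))
         = real (card (demands_of_stats N K s)) * (\<Sum>i\<in>{1..n}. \<Sum>f\<in>{1..N}. h i f)"
proof -
  define D where "D = demands_of_stats N K s"
  define T where "T d = first_requesters K d" for d
  define G where "G d = (\<Sum>k\<in>T d. h (rank_in (T d) k) (d k))" for d
  have D: "d \<in> demands N K" if "d \<in> D" for d using that by (simp add: D_def demands_of_stats_def)
  have rotated: "(\<Sum>d\<in>D. G d) = (\<Sum>d\<in>D. \<Sum>k\<in>T d. h (rank_in (T d) k) (rotate_file N t (d k)))" for t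
  proof -
    have "(\<Sum>d\<in>D. G d) = (\<Sum>d\<in>D. G (rotate_demand N K t d))"
      using sum.reindex_bij_betw[OF bij_betw_rotate_demand[OF N], of G] by (simp add: D_def)
    also have "\<dots> = (\<Sum>d\<in>D. \<Sum>k\<in>T d. h (rank_in (T d) k) (rotate_file N t (d k)))"
    proof (rule sum.cong[OF refl])
      fix d assume "d \<in> D"
      then show "G (rotate_demand N K t d) = (\<Sum>k\<in>T d. h (rank_in (T d) k) (rotate_file N t (d k)))"
        unfolding G_def T_def first_requesters_rotate_demand[OF D[OF \<open>d \<in> D\<close>]]
        using first_requesters_subset[of K d] by (intro sum.cong refl) (auto simp: rotate_demand_apply)
    qed
    finally show ?thesis .
  qed
  have "real N * (\<Sum>d\<in>D. G d) = (\<Sum>t<N. \<Sum>d\<in>D. \<Sum>k\<in>T d. h (rank_in (T d) k) (rotate_file N t (d k)))"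
    by (simp flip: rotated)
  also have "\<dots> = (\<Sum>d\<in>D. \<Sum>k\<in>T d. \<Sum>t<N. h (rank_in (T d) k) (rotate_file N t (d k)))"
    by (subst sum.swap) (intro sum.cong refl sum.swap)
  also have "\<dots> = (\<Sum>d\<in>D. \<Sum>k\<in>T d. \<Sum>f\<in>{1..N}. h (rank_in (T d) k) f)"
    by (intro sum.cong refl sum_rotate_file[OF N])
  also have "\<dots> = (\<Sum>d\<in>D. \<Sum>i\<in>{1..n}. \<Sum>f\<in>{1..N}. h i f)"
  proof (rule sum.cong[OF refl])
    fix d assume "d \<in> D"
    have "(\<Sum>k\<in>T d. \<Sum>f\<in>{1..N}. h (rank_in (T d) k) f) = (\<Sum>i\<in>{1..card (T d)}. \<Sum>f\<in>{1..N}. h i f)"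
      unfolding T_def
      by (rule sum.reindex_bij_betw[OF bij_betw_rank_in[OF finite_first_requesters], of "\<lambda>i. \<Sum>f\<in>{1..N}. h i f"])
    then show "(\<Sum>k\<in>T d. \<Sum>f\<in>{1..N}. h (rank_in (T d) k) f) = (\<Sum>i\<in>{1..n}. \<Sum>f\<in>{1..N}. h i f)"
      using n \<open>d \<in> D\<close> by (simp add: T_def D_def)
  qed
  finally show ?thesis by (simp add: D_def G_def T_def)
qed

section \<open>Jensen's inequality for the uncached bits\<close>

lemma cache_prob_le_1: "valid_prefetch N F M P \<Longrightarrow> cache_prob N F P b \<le> 1"
  unfolding cache_prob_def
  using sum_mono[of "Pow (bit_idx N F)" "\<lambda>S. pmf P S * of_bool (b \<in> S)" "pmf P"]
  by (simp add: sum_pmf_Pow_bit_idx)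

lemma sum_cache_prob_le:
  assumes vp: "valid_prefetch N F M P"
  shows "(\<Sum>b\<in>bit_idx N F. cache_prob N F P b) \<le> M * real F"
proof -
  have "(\<Sum>b\<in>bit_idx N F. cache_prob N F P b) = (\<Sum>S\<in>Pow (bit_idx N F). pmf P S * real (card S))"
    unfolding cache_prob_def
    by (subst sum.swap) (auto simp: sum_distrib_left[symmetric] Int_absorb1 intro!: sum.cong)
  also have "\<dots> \<le> (\<Sum>S\<in>Pow (bit_idx N F). pmf P S * (M * real F))"
  proof (rule sum_mono)
    fix S
    show "pmf P S * real (card S) \<le> pmf P S * (M * real F)"
      using vp by (cases "S \<in> set_pmf P") (auto simp: valid_prefetch_def set_pmf_eq intro: mult_left_mono)
  qed
  also have "\<dots> = M * real F"
    by (simp add: sum_pmf_Pow_bit_idx[OF vp] flip: sum_distrib_right)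
  finally show ?thesis .
qed

lemma sum_uncached_power_ge:
  assumes vp: "valid_prefetch N F M P" and M: "0 < M" "M \<le> real N" and F: "0 < F"
  shows "real N * real F * (1 - M / real N) ^ i
           \<le> (\<Sum>f\<in>{1..N}. \<Sum>j\<in>{1..F}. (1 - cache_prob N F P (f, j)) ^ i)"
proof -
  define m where "m = real N * real F"
  have N: "0 < real N" using M by linarith
  have m: "0 < m" using N F by (simp add: m_def)
  have card: "real (card (bit_idx N F)) = m" by (simp add: card_bit_idx m_def)
  have "1 - M / real N = (m - M * real F) / m"
    using N F by (simp add: m_def field_simps)
  also have "\<dots> \<le> (m - (\<Sum>b\<in>bit_idx N F. cache_prob N F P b)) / m"
    using sum_cache_prob_le[OF vp] m by (intro divide_right_mono) auto
  also have "\<dots> = (\<Sum>b\<in>bit_idx N F. 1 - cache_prob N F P b) / m"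
    by (simp add: sum_subtractf card)
  finally have mean: "1 - M / real N \<le> (\<Sum>b\<in>bit_idx N F. 1 - cache_prob N F P b) / m" .
  then have "(1 - M / real N) ^ i \<le> ((\<Sum>b\<in>bit_idx N F. 1 - cache_prob N F P b) / m) ^ i"
    using M by (intro power_mono) auto
  also have "\<dots> \<le> (\<Sum>b\<in>bit_idx N F. (1 - cache_prob N F P b) ^ i) / m"
    using power_mean_le[of "bit_idx N F" "\<lambda>b. 1 - cache_prob N F P b" i]
      card m cache_prob_le_1[OF vp] by fastforce
  finally show ?thesis
    using m by (simp add: m_def bit_idx_def sum.cartesian_product field_simps)
qed

definition expected_uncached ::
  "nat \<Rightarrow> nat \<Rightarrow> nat \<Rightarrow> (nat \<times> nat) set pmf \<Rightarrow> (nat \<Rightarrow> nat) \<Rightarrow> real" where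
  "expected_uncached N F K P d =
     (\<Sum>k\<in>first_requesters K d. \<Sum>j\<in>{1..F}.
        (1 - cache_prob N F P (d k, j)) ^ rank_in (first_requesters K d) k)"

lemma Rstar_d_ge_expected_uncached:
  assumes "valid_prefetch N F M P" "d \<in> demands N K" "0 < F" "0 < eps"
  shows "expected_uncached N F K P d / real F - (1 / real F + real (card (d ` {1..K})) ^ 2 * eps)
           \<le> Rstar_d N F K eps d P"
  using Rstar_d_ge[OF assms(1,2) first_requesters_subset inj_on_first_requesters assms(3,4)]
  by (simp add: expected_uncached_def card_first_requesters)

lemma sum_expected_uncached_ge:
  assumes vp: "valid_prefetch N F M P" and M: "0 < M" "M \<le> real N" and F: "0 < F"
  shows "real (card (demands_of_stats N K s)) * real F * (\<Sum>i=1..Ne s. (1 - M / real N) ^ i)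
           \<le> (\<Sum>d\<in>demands_of_stats N K s. expected_uncached N F K P d)"
proof -
  define D where "D = demands_of_stats N K s"
  define H where "H i = (\<Sum>f\<in>{1..N}. \<Sum>j\<in>{1..F}. (1 - cache_prob N F P (f, j)) ^ i)" for i
  have N: "0 < N" using M by linarith
  have "card (first_requesters K d) = Ne s" if "d \<in> D" for d
    using that Ne_stats card_first_requesters by (auto simp: D_def demands_of_stats_def)
  then have by_rank: "real N * (\<Sum>d\<in>D. expected_uncached N F K P d) = real (card D) * (\<Sum>i=1..Ne s. H i)"
    using sum_demands_of_stats_by_rank[OF N, of K s "Ne s"
        "\<lambda>i f. \<Sum>j\<in>{1..F}. (1 - cache_prob N F P (f, j)) ^ i"]
    by (simp add: D_def H_def expected_uncached_def)
  have "real N * (real (card D) * real F * (\<Sum>i=1..Ne s. (1 - M / real N) ^ i))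
      = real (card D) * (\<Sum>i=1..Ne s. real N * real F * (1 - M / real N) ^ i)"
    by (simp add: sum_distrib_left algebra_simps)
  also have "\<dots> \<le> real (card D) * (\<Sum>i=1..Ne s. H i)"
    unfolding H_def by (intro mult_left_mono sum_mono sum_uncached_power_ge[OF vp M F]) simp
  also have "\<dots> = real N * (\<Sum>d\<in>D. expected_uncached N F K P d)"
    by (simp add: by_rank)
  finally show ?thesis using N by (simp add: D_def mult_le_cancel_left_pos)
qed

theorem lemma3:
  fixes N K F :: nat and M eps :: real and s :: "nat list"
    and P :: "(nat \<times> nat) set pmf"
  assumes "0 < M" and "M \<le> real N" and "F > 0" and "eps > 0"
    and "s \<in> stats N K ` demands N K"
    and "valid_prefetch N F M P"
  shows "Rstar_s N F K eps s P \<ge>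
           (real N - M) / M * (1 - (1 - M / real N) ^ Ne s)
           - (1 / real F + real (Ne s) ^ 2 * eps)"
proof -
  define D where "D = demands_of_stats N K s"
  define G where "G = (\<Sum>i=1..Ne s. (1 - M / real N) ^ i)"
  have "finite D" "D \<noteq> {}"
    using assms(5) by (auto simp: D_def demands_of_stats_def demands_def finite_PiE)
  then have card_D: "0 < card D" by auto
  have "real (card D) * real F * G \<le> (\<Sum>d\<in>D. expected_uncached N F K P d)"
    using sum_expected_uncached_ge[OF assms(6,1,2,3)] by (simp add: D_def G_def)
  then have "real (card D) * G \<le> (\<Sum>d\<in>D. expected_uncached N F K P d / real F)"
    using assms(3) by (simp add: field_simps flip: sum_divide_distrib)
  then have "real (card D) * (G - (1 / real F + real (Ne s) ^ 2 * eps))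
      \<le> (\<Sum>d\<in>D. expected_uncached N F K P d / real F - (1 / real F + real (Ne s) ^ 2 * eps))"
    by (simp add: sum_subtractf algebra_simps)
  also have "\<dots> \<le> (\<Sum>d\<in>D. Rstar_d N F K eps d P)"
    using Rstar_d_ge_expected_uncached[OF assms(6) _ assms(3,4)] Ne_stats
    by (intro sum_mono) (auto simp: D_def demands_of_stats_def)
  finally have "G - (1 / real F + real (Ne s) ^ 2 * eps) \<le> Rstar_s N F K eps s P"
    using card_D by (simp add: Rstar_s_def D_def field_simps)
  moreover have "G = (real N - M) / M * (1 - (1 - M / real N) ^ Ne s)"
  proof -
    have ne: "M / real N \<noteq> 0" and ratio: "(1 - M / real N) / (M / real N) = (real N - M) / M"
      using assms(1,2) by (simp_all add: field_simps)
    show ?thesis by (simp only: G_def sum_power_one_minus[OF ne] ratio)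
  qed
  ultimately show ?thesis by simp
qed

end
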